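(* Let $\Lambda$ be a lattice of rank $n$, $U=\Lambda\otimes\mathbb{R}$, and let $X\subset\Lambda$ be a basis of $U$. Then $$M_X(x,1)=\sum_{k=0}^n\Big(\sum_{A\subseteq X,\ |A|=n-k}h(A)\Big)x^k.$$
   Context: For a list $Y$, $\mathcal{Z}(Y)=\{\sum_{y\in Y}t_y y: 0\le t_y\le 1\}$; for $A\subseteq X$, $\mathcal{Z}(A)$ is a face of the parallelepiped $\mathcal{Z}(X)$. A point $p\in\Lambda\cap\mathcal{Z}(X)$ is internal to a face $F$ if $F$ is the smallest face of $\mathcal{Z}(X)$ containing $p$, and $h(A)$ is the number of points of $\Lambda$ internal to $\mathcal{Z}(A)$. For $A\subseteq X$: $r(A)=\dim_{\mathbb{R}}\langle A\rangle_{\mathbb{R}}$, $m(A)=[\Lambda\cap\langle A\rangle_{\mathbb{R}}:\langle A\rangle_{\mathbb{Z}}]$, and $M_X(x,y)=\sum_{A\subseteq X} m(A)(x-1)^{r(X)-r(A)}(y-1)^{|A|-r(A)}$. *)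

theory Defs
  imports "HOL-Analysis.Analysis"
begin

definition zspan :: "('a::real_vector) set \<Rightarrow> 'a set" where
  "zspan A = {(\<Sum>a\<in>A. of_int (c a) *\<^sub>R a) | c. True}"

text \<open>A lattice of full rank in the real vector space real^'n, i.e. the integer span
  of a basis; its rank is CARD('n) and real^'n plays the role of U.\<close>
definition full_lattice :: "(real^'n) set \<Rightarrow> bool" where
  "full_lattice L \<longleftrightarrow> (\<exists>B. finite B \<and> independent B \<and> span B = UNIV \<and> L = zspan B)"

definition zonotope :: "('a::real_vector) set \<Rightarrow> 'a set" where
  "zonotope A = {(\<Sum>y\<in>A. t y *\<^sub>R y) | t. \<forall>y\<in>A. 0 \<le> t y \<and> t y \<le> 1}"

definition internal_to :: "('a::euclidean_space) set \<Rightarrow> 'a \<Rightarrow> 'a set \<Rightarrow> bool" where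
  "internal_to X p F \<longleftrightarrow> F face_of zonotope X \<and> p \<in> F \<and>
      (\<forall>G. G face_of zonotope X \<and> p \<in> G \<longrightarrow> F \<subseteq> G)"

definition hcount :: "('a::euclidean_space) set \<Rightarrow> 'a set \<Rightarrow> 'a set \<Rightarrow> nat" where
  "hcount L X A = card {p \<in> L \<inter> zonotope X. internal_to X p (zonotope A)}"

definition mult :: "('a::real_vector) set \<Rightarrow> 'a set \<Rightarrow> nat" where
  "mult L A = card ((\<lambda>v. (\<lambda>w. v + w) ` zspan A) ` (L \<inter> span A))"

definition arith_tutte :: "('a::euclidean_space) set \<Rightarrow> 'a set \<Rightarrow> real \<Rightarrow> real \<Rightarrow> real" where
  "arith_tutte L X x y = (\<Sum>A\<in>Pow X. real (mult L A) * (x - 1) ^ (dim X - dim A)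
        * (y - 1) ^ (card A - dim A))"

end

theory Submission
  imports Defs
begin

text \<open>Everything is read off the coordinates with respect to the basis \<open>X\<close>. A point of
  \<open>Z(X)\<close> is internal to \<open>Z(C)\<close> exactly when its coordinates lie in \<open>(0,1)\<close> on \<open>C\<close> and
  vanish off \<open>C\<close>. Reducing coordinates modulo 1 shows that the lattice points with coordinates
  in \<open>[0,1)\<close> supported in \<open>A\<close> form a system of representatives of
  \<open>(\<Lambda> \<inter> \<langle>A\<rangle>\<^sub>\<real>) / \<langle>A\<rangle>\<^sub>\<int>\<close>; sorting them by their support gives
  \<open>m(A) = (\<Sum>C \<subseteq> A. h(C))\<close>. As \<open>X\<close> is independent,
  \<open>M\<^sub>X(x,1) = (\<Sum>A \<subseteq> X. m(A) (x - 1)\<^bsup>|X - A|\<^esup>)\<close>, and after exchanging the sums the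
  binomial theorem turns \<open>(\<Sum>A with C \<subseteq> A \<subseteq> X. (x - 1)\<^bsup>|X - A|\<^esup>)\<close> into
  \<open>x\<^bsup>|X - C|\<^esup>\<close>.\<close>

section \<open>Sums over subsets\<close>

lemma card_subset_fibres_eq_sum_Pow:
  assumes "finite S" "finite A"
  shows "card {x \<in> S. f x \<subseteq> A} = (\<Sum>C\<in>Pow A. card {x \<in> S. f x = C})"
proof -
  have "card {x \<in> S. f x \<subseteq> A} = (\<Sum>x | x \<in> S \<and> f x \<subseteq> A. 1)"
    by simp
  also have "\<dots> = (\<Sum>C\<in>Pow A. \<Sum>x | x \<in> {x \<in> S. f x \<subseteq> A} \<and> f x = C. 1)"
    by (rule sum.group[symmetric]) (use assms in auto)
  also have "\<dots> = (\<Sum>C\<in>Pow A. card {x \<in> S. f x = C})"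
    by (intro sum.cong refl) (auto intro: arg_cong[where f = card])
  finally show ?thesis .
qed

lemma sum_Pow_power_card:
  fixes a :: "'b::comm_semiring_1"
  assumes "finite S"
  shows "(\<Sum>E\<in>Pow S. a ^ card E) = (a + 1) ^ card S"
  using prod_add[OF assms, of "\<lambda>_. a" "\<lambda>_. 1"] by (simp add: add.commute)

lemma sum_supersets_power_card_diff:
  fixes a :: "'b::comm_semiring_1"
  assumes "finite X" "C \<subseteq> X"
  shows "(\<Sum>A | C \<subseteq> A \<and> A \<subseteq> X. a ^ card (X - A)) = (a + 1) ^ card (X - C)"
proof -
  have "{A. C \<subseteq> A \<and> A \<subseteq> X} = (\<lambda>E. X - E) ` Pow (X - C)"
    using assms(2) by (auto simp: image_iff intro!: exI[of _ "X - _"])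
  moreover have "inj_on (\<lambda>E. X - E) (Pow (X - C))"
    by (rule inj_onI) auto
  moreover have "X - (X - E) = E" if "E \<in> Pow (X - C)" for E
    using that by auto
  ultimately have "(\<Sum>A | C \<subseteq> A \<and> A \<subseteq> X. a ^ card (X - A)) = (\<Sum>E\<in>Pow (X - C). a ^ card E)"
    by (simp add: sum.reindex)
  also have "\<dots> = (a + 1) ^ card (X - C)"
    using assms(1) by (simp add: sum_Pow_power_card)
  finally show ?thesis .
qed

lemma sum_Pow_cumulative_power:
  fixes f :: "'a set \<Rightarrow> 'b::comm_ring_1"
  assumes "finite X"
  shows "(\<Sum>A\<in>Pow X. (\<Sum>C\<in>Pow A. f C) * (x - 1) ^ card (X - A))
       = (\<Sum>C\<in>Pow X. f C * x ^ card (X - C))"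
proof -
  have "(\<Sum>A\<in>Pow X. (\<Sum>C\<in>Pow A. f C) * (x - 1) ^ card (X - A))
      = (\<Sum>A\<in>Pow X. \<Sum>C | C \<in> Pow X \<and> C \<subseteq> A. f C * (x - 1) ^ card (X - A))"
    by (intro sum.cong) (auto simp: sum_distrib_right intro: sum.cong)
  also have "\<dots> = (\<Sum>C\<in>Pow X. \<Sum>A | A \<in> Pow X \<and> C \<subseteq> A. f C * (x - 1) ^ card (X - A))"
    using assms by (intro sum.swap_restrict) auto
  also have "\<dots> = (\<Sum>C\<in>Pow X. f C * (\<Sum>A | C \<subseteq> A \<and> A \<subseteq> X. (x - 1) ^ card (X - A)))"
    by (intro sum.cong) (auto simp: sum_distrib_left intro: sum.cong)
  also have "\<dots> = (\<Sum>C\<in>Pow X. f C * x ^ card (X - C))"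
    using assms by (intro sum.cong) (auto simp: sum_supersets_power_card_diff)
  finally show ?thesis .
qed

lemma sum_Pow_group_by_card:
  fixes g :: "'a set \<Rightarrow> 'b::comm_semiring_1"
  assumes "finite X" "card X = n"
  shows "(\<Sum>C\<in>Pow X. g C * x ^ card (X - C))
       = (\<Sum>k = 0..n. (\<Sum>A | A \<subseteq> X \<and> card A = n - k. g A) * x ^ k)"
proof -
  have card_le: "card C \<le> n" if "C \<subseteq> X" for C
    using assms card_mono that by blast
  have "(\<Sum>C\<in>Pow X. g C * x ^ card (X - C))
      = (\<Sum>k = 0..n. \<Sum>C | C \<in> Pow X \<and> n - card C = k. g C * x ^ card (X - C))"
    using assms(1) card_le by (intro sum.group[symmetric]) auto
  also have "\<dots> = (\<Sum>k = 0..n. (\<Sum>A | A \<subseteq> X \<and> card A = n - k. g A) * x ^ k)"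
  proof (intro sum.cong refl)
    fix k assume "k \<in> {0..n}"
    then have "k \<le> n"
      by simp
    then have "{C. C \<in> Pow X \<and> n - card C = k} = {A. A \<subseteq> X \<and> card A = n - k}"
      using card_le by fastforce
    moreover have "card (X - C) = n - card C" if "C \<subseteq> X" for C
      using assms that by (simp add: card_Diff_subset finite_subset)
    ultimately show "(\<Sum>C | C \<in> Pow X \<and> n - card C = k. g C * x ^ card (X - C))
        = (\<Sum>A | A \<subseteq> X \<and> card A = n - k. g A) * x ^ k"
      using \<open>k \<le> n\<close> by (auto simp: sum_distrib_right intro: sum.cong)
  qed
  finally show ?thesis .
qed

section \<open>Integer spans\<close>

lemma representation_lincomb:
  fixes B :: "'a::euclidean_space set"
  assumes "independent B" "A \<subseteq> B"
  shows "representation B (\<Sum>a\<in>A. f a *\<^sub>R a) y = (if y \<in> A then f y else 0)"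
proof -
  have "finite A"
    using assms finiteI_independent finite_subset by blast
  have "representation B (\<Sum>a\<in>A. f a *\<^sub>R a) y = (\<Sum>a\<in>A. f a * representation B a y)"
    using assms by (simp add: representation_sum[OF assms(1)] representation_scale[OF assms(1)]
        span_base span_scale subsetD)
  also have "\<dots> = (\<Sum>a\<in>A. if a = y then f a else 0)"
    using assms by (intro sum.cong) (auto simp: representation_basis)
  finally show ?thesis
    using \<open>finite A\<close> by simp
qed

lemma zspan_zero: "0 \<in> zspan A"
  unfolding zspan_def by (auto intro!: exI[of _ "\<lambda>_. 0"])

lemma zspan_add: "u \<in> zspan A \<Longrightarrow> v \<in> zspan A \<Longrightarrow> u + v \<in> zspan A"
proof -
  assume "u \<in> zspan A" "v \<in> zspan A"
  then obtain c d where "u = (\<Sum>a\<in>A. of_int (c a) *\<^sub>R a)" "v = (\<Sum>a\<in>A. of_int (d a) *\<^sub>R a)"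
    unfolding zspan_def by blast
  then have "u + v = (\<Sum>a\<in>A. of_int (c a + d a) *\<^sub>R a)"
    by (simp add: sum.distrib scaleR_add_left)
  then show ?thesis
    unfolding zspan_def by (intro CollectI exI[of _ "\<lambda>a. c a + d a"]) simp
qed

lemma zspan_of_int_scale: "v \<in> zspan A \<Longrightarrow> of_int k *\<^sub>R v \<in> zspan A"
proof -
  assume "v \<in> zspan A"
  then obtain c where "v = (\<Sum>a\<in>A. of_int (c a) *\<^sub>R a)"
    unfolding zspan_def by blast
  then have "of_int k *\<^sub>R v = (\<Sum>a\<in>A. of_int (k * c a) *\<^sub>R a)"
    by (simp add: scaleR_sum_right)
  then show ?thesis
    unfolding zspan_def by (intro CollectI exI[of _ "\<lambda>a. k * c a"]) simp
qed

lemma zspan_uminus: "v \<in> zspan A \<Longrightarrow> - v \<in> zspan A"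
  using zspan_of_int_scale[of v A "-1"] by simp

lemma zspan_diff: "u \<in> zspan A \<Longrightarrow> v \<in> zspan A \<Longrightarrow> u - v \<in> zspan A"
  using zspan_add zspan_uminus by (metis diff_conv_add_uminus)

lemma zspan_sum: "(\<And>i. i \<in> I \<Longrightarrow> f i \<in> zspan A) \<Longrightarrow> sum f I \<in> zspan A"
  by (induction I rule: infinite_finite_induct) (auto intro: zspan_zero zspan_add)

lemma zspan_subset_zspan: "A \<subseteq> zspan B \<Longrightarrow> zspan A \<subseteq> zspan B"
  unfolding zspan_def[of A] by (auto intro!: zspan_sum zspan_of_int_scale)

lemma zspan_translate_eq_iff:
  "(+) u ` zspan A = (+) v ` zspan A \<longleftrightarrow> u - v \<in> zspan A"
proof
  assume "(+) u ` zspan A = (+) v ` zspan A"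
  then have "u \<in> (+) v ` zspan A"
    using zspan_zero by (metis add.right_neutral imageI)
  then show "u - v \<in> zspan A"
    by auto
next
  assume uv: "u - v \<in> zspan A"
  have "(+) u ` zspan A \<subseteq> (+) v ` zspan A" if "u - v \<in> zspan A" for u v
  proof
    fix x assume "x \<in> (+) u ` zspan A"
    then obtain z where "z \<in> zspan A" "x = v + ((u - v) + z)"
      by auto
    then show "x \<in> (+) v ` zspan A"
      using that zspan_add by blast
  qed
  from this[OF uv] this[of v u] show "(+) u ` zspan A = (+) v ` zspan A"
    using zspan_uminus[OF uv] by auto
qed

lemma representation_zspan_Ints:
  fixes B :: "'a::euclidean_space set"
  assumes "independent B" "A \<subseteq> B" "v \<in> zspan A"
  shows "representation B v b \<in> \<int>"
  using assms unfolding zspan_def by (auto simp: representation_lincomb)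

lemma bounded_zonotope:
  fixes A :: "'a::real_normed_vector set"
  shows "bounded (zonotope A)"
  unfolding bounded_iff
proof (intro exI ballI)
  fix v assume "v \<in> zonotope A"
  then obtain t where v: "v = (\<Sum>y\<in>A. t y *\<^sub>R y)" and t: "\<forall>y\<in>A. 0 \<le> t y \<and> t y \<le> 1"
    unfolding zonotope_def by blast
  have "norm v \<le> (\<Sum>y\<in>A. norm (t y *\<^sub>R y))"
    unfolding v by (rule norm_sum)
  also have "\<dots> \<le> (\<Sum>y\<in>A. norm y)"
    using t by (intro sum_mono) (simp add: mult_left_le_one_le)
  finally show "norm v \<le> (\<Sum>y\<in>A. norm y)" .
qed

lemma finite_zspan_Int_bounded:
  fixes B :: "'a::euclidean_space set"
  assumes B: "independent B" "span B = UNIV" and "bounded S"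
  shows "finite (zspan B \<inter> S)"
proof -
  have "\<exists>N. \<forall>v\<in>S. \<bar>representation B v b\<bar> \<le> N" for b
    using bounded_linear_image[OF \<open>bounded S\<close> bounded_linear_representation[OF B]]
    by (auto simp: bounded_iff)
  then obtain N where N: "\<And>b v. v \<in> S \<Longrightarrow> \<bar>representation B v b\<bar> \<le> N b"
    by metis
  define g where "g v = restrict (\<lambda>b. \<lfloor>representation B v b\<rfloor>) B" for v
  have int: "of_int \<lfloor>representation B v b\<rfloor> = representation B v b" if "v \<in> zspan B" for v b
    using representation_zspan_Ints[OF B(1) order_refl that] by simp
  have "finite B"
    using B(1) finiteI_independent by blast
  have "inj_on g (zspan B \<inter> S)"
  proof
    fix u v assume u: "u \<in> zspan B \<inter> S" and v: "v \<in> zspan B \<inter> S" and "g u = g v"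
    have "representation B u b = representation B v b" if "b \<in> B" for b
    proof -
      have "\<lfloor>representation B u b\<rfloor> = \<lfloor>representation B v b\<rfloor>"
        using fun_cong[OF \<open>g u = g v\<close>, of b] that by (simp add: g_def)
      then show ?thesis
        using int[of u b] int[of v b] u v by (metis IntD1)
    qed
    then have "(\<Sum>b\<in>B. representation B u b *\<^sub>R b) = (\<Sum>b\<in>B. representation B v b *\<^sub>R b)"
      by simp
    then show "u = v"
      using sum_representation_eq[OF B(1) _ \<open>finite B\<close> order_refl] B(2) by simp
  qed
  moreover have "g ` (zspan B \<inter> S) \<subseteq> PiE B (\<lambda>b. {-\<lceil>N b\<rceil>..\<lceil>N b\<rceil>})"
  proof -
    have "\<lfloor>representation B v b\<rfloor> \<in> {-\<lceil>N b\<rceil>..\<lceil>N b\<rceil>}" if "v \<in> S" for v b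
      using N[OF that, of b] le_of_int_ceiling[of "N b"]
      unfolding atLeastAtMost_iff le_floor_iff floor_le_iff abs_le_iff of_int_minus by linarith
    then show ?thesis
      by (auto simp: g_def)
  qed
  ultimately show ?thesis
    using \<open>finite B\<close> by (intro inj_on_finite[of g]) (auto intro: finite_PiE)
qed

section \<open>Coordinates with respect to a basis and faces of the parallelepiped\<close>

lemma finite_pos_lower_bound:
  fixes f :: "'a \<Rightarrow> real"
  assumes "finite A" "\<And>y. y \<in> A \<Longrightarrow> 0 < f y"
  obtains d where "0 < d" "\<And>y. y \<in> A \<Longrightarrow> d \<le> f y"
proof
  show "0 < Min (insert 1 (f ` A))"
    using assms by (subst Min_gr_iff) auto
  show "Min (insert 1 (f ` A)) \<le> f y" if "y \<in> A" for y
    using assms(1) that by (intro Min.coboundedI) auto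
qed

lemma face_of_linear_level_set:
  fixes f :: "'a::real_vector \<Rightarrow> real"
  assumes "convex S" "linear f" and le: "\<And>x. x \<in> S \<Longrightarrow> f x \<le> b"
  shows "{x \<in> S. f x = b} face_of S"
  unfolding face_of_def
proof (intro conjI ballI impI)
  show "{x \<in> S. f x = b} \<subseteq> S"
    by auto
  have "{x \<in> S. f x = b} = S \<inter> f -` {b}"
    by auto
  then show "convex {x \<in> S. f x = b}"
    using assms by (simp add: convex_Int convex_linear_vimage)
next
  fix a c x
  assume a: "a \<in> S" and c: "c \<in> S" and x: "x \<in> {x \<in> S. f x = b}" and "x \<in> open_segment a c"
  then obtain u where u: "0 < u" "u < 1" and "x = (1 - u) *\<^sub>R a + u *\<^sub>R c"
    by (auto simp: in_segment)
  then have "f x = (1 - u) * f a + u * f c"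
    using \<open>linear f\<close> by (simp add: linear_add linear_scale)
  then have "(1 - u) * (b - f a) + u * (b - f c) = 0"
    using x by (simp add: algebra_simps)
  moreover have "0 \<le> (1 - u) * (b - f a)" "0 \<le> u * (b - f c)"
    using u le[OF a] le[OF c] by simp_all
  ultimately show "a \<in> {x \<in> S. f x = b}" "c \<in> {x \<in> S. f x = b}"
    using a c u by (simp_all add: add_nonneg_eq_0_iff)
qed

text \<open>Coordinates with respect to \<open>X\<close> vanish at vectors outside \<open>X\<close>, so quantifying over all
  \<open>y\<close> only constrains the coordinates on \<open>X\<close>.\<close>

definition half_open_box_points :: "'a::real_vector set \<Rightarrow> 'a set \<Rightarrow> 'a set" where
  "half_open_box_points L X =
     {p \<in> L. \<forall>y. 0 \<le> representation X p y \<and> representation X p y < 1}"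

locale coordinate_basis =
  fixes X :: "'a::euclidean_space set"
  assumes independent: "independent X" and spanning: "span X = UNIV"
begin

abbreviation coord :: "'a \<Rightarrow> 'a \<Rightarrow> real" where
  "coord \<equiv> representation X"

lemma finite_basis: "finite X"
  using independent finiteI_independent by blast

lemma coord_add [simp]: "coord (u + v) y = coord u y + coord v y"
  by (simp add: representation_add[OF independent] spanning)

lemma coord_diff [simp]: "coord (u - v) y = coord u y - coord v y"
  by (simp add: representation_diff[OF independent] spanning)

lemma coord_scale [simp]: "coord (r *\<^sub>R v) y = r * coord v y"
  by (simp add: representation_scale[OF independent] spanning)

lemma coord_zero [simp]: "coord 0 y = 0"
  by (simp add: representation_zero)

lemma coord_basis_vector: "x \<in> X \<Longrightarrow> coord x y = (if y = x then 1 else 0)"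
  by (simp add: representation_basis[OF independent])

lemma coord_lincomb: "A \<subseteq> X \<Longrightarrow> coord (\<Sum>a\<in>A. f a *\<^sub>R a) y = (if y \<in> A then f y else 0)"
  by (rule representation_lincomb[OF independent])

lemma linear_coord: "linear (\<lambda>v. coord v y)"
  using bounded_linear_representation[OF independent spanning] bounded_linear.linear by blast

lemma sum_coord: "(\<Sum>y\<in>X. coord v y *\<^sub>R y) = v"
  using sum_representation_eq[OF independent _ finite_basis order_refl] spanning by simp

lemma sum_coord_subset:
  assumes "A \<subseteq> X" "\<And>y. y \<notin> A \<Longrightarrow> coord v y = 0"
  shows "(\<Sum>y\<in>A. coord v y *\<^sub>R y) = v"
proof -
  have "(\<Sum>y\<in>A. coord v y *\<^sub>R y) = (\<Sum>y\<in>X. coord v y *\<^sub>R y)"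
    using assms finite_basis by (intro sum.mono_neutral_left) auto
  then show ?thesis
    by (simp add: sum_coord)
qed

lemma coord_eqI: "(\<And>y. coord u y = coord v y) \<Longrightarrow> u = v"
  using sum_coord[of u] by (simp add: sum_coord)

lemma span_eq_coords:
  assumes "A \<subseteq> X"
  shows "span A = {v. \<forall>y. y \<notin> A \<longrightarrow> coord v y = 0}"
proof (intro equalityI subsetI CollectI allI impI)
  fix v y assume "v \<in> span A" "y \<notin> A"
  then have "coord v y = representation A v y"
    using representation_extend[OF independent _ assms] by simp
  then show "coord v y = 0"
    using representation_ne_zero[of A v y] \<open>y \<notin> A\<close> by auto
next
  fix v assume "v \<in> {v. \<forall>y. y \<notin> A \<longrightarrow> coord v y = 0}"
  then have "v = (\<Sum>y\<in>A. coord v y *\<^sub>R y)"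
    using sum_coord_subset[OF assms] by simp
  moreover have "(\<Sum>y\<in>A. coord v y *\<^sub>R y) \<in> span A"
    by (intro span_sum span_scale span_base)
  ultimately show "v \<in> span A"
    by simp
qed

lemma zonotope_eq_coords:
  assumes "A \<subseteq> X"
  shows "zonotope A =
    {v. \<forall>y. (y \<in> A \<longrightarrow> 0 \<le> coord v y \<and> coord v y \<le> 1) \<and> (y \<notin> A \<longrightarrow> coord v y = 0)}"
proof (intro equalityI subsetI)
  fix v assume "v \<in> zonotope A"
  then show "v \<in> {v. \<forall>y. (y \<in> A \<longrightarrow> 0 \<le> coord v y \<and> coord v y \<le> 1) \<and> (y \<notin> A \<longrightarrow> coord v y = 0)}"
    using assms by (auto simp: zonotope_def coord_lincomb)
next
  fix v assume v: "v \<in> {v. \<forall>y. (y \<in> A \<longrightarrow> 0 \<le> coord v y \<and> coord v y \<le> 1) \<and> (y \<notin> A \<longrightarrow> coord v y = 0)}"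
  then have "v = (\<Sum>y\<in>A. coord v y *\<^sub>R y)"
    using sum_coord_subset[OF assms] by simp
  then show "v \<in> zonotope A"
    using v unfolding zonotope_def by blast
qed

lemma mem_zonotope_iff: "v \<in> zonotope X \<longleftrightarrow> (\<forall>y. 0 \<le> coord v y \<and> coord v y \<le> 1)"
proof -
  have "(y \<in> X \<longrightarrow> 0 \<le> coord v y \<and> coord v y \<le> 1) \<and> (y \<notin> X \<longrightarrow> coord v y = 0)
    \<longleftrightarrow> 0 \<le> coord v y \<and> coord v y \<le> 1" for y
    using representation_ne_zero[of X v y] by (cases "y \<in> X") auto
  then show ?thesis
    by (simp add: zonotope_eq_coords[OF order_refl])
qed

lemma convex_zonotope: "convex (zonotope X)"
proof -
  have "zonotope X = (\<Inter>y. (\<lambda>v. coord v y) -` {0..1})"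
    by (auto simp: mem_zonotope_iff)
  then show ?thesis
    by (simp add: convex_INT convex_linear_vimage linear_coord)
qed

lemma zonotope_face_of:
  assumes "A \<subseteq> X"
  shows "zonotope A face_of zonotope X"
proof -
  let ?f = "\<lambda>v. - (\<Sum>y\<in>X - A. coord v y)"
  have "(y \<in> A \<longrightarrow> 0 \<le> coord v y \<and> coord v y \<le> 1) \<and> (y \<notin> A \<longrightarrow> coord v y = 0)
    \<longleftrightarrow> (0 \<le> coord v y \<and> coord v y \<le> 1) \<and> (y \<in> X - A \<longrightarrow> coord v y = 0)" for v y
    using assms representation_ne_zero[of X v y] by (cases "y \<in> A"; cases "y \<in> X") auto
  then have "zonotope A = {v \<in> zonotope X. \<forall>y\<in>X - A. coord v y = 0}"
    by (simp add: zonotope_eq_coords[OF assms] mem_zonotope_iff all_conj_distrib Ball_def)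
  also have "\<dots> = {v \<in> zonotope X. ?f v = 0}"
    using finite_basis by (auto simp: mem_zonotope_iff sum_nonneg_eq_0_iff)
  finally have eq: "zonotope A = {v \<in> zonotope X. ?f v = 0}" .
  have "linear ?f"
    by (intro linear_compose_neg linear_compose_sum ballI linear_coord)
  moreover have "?f v \<le> 0" if "v \<in> zonotope X" for v
    using that by (simp add: mem_zonotope_iff sum_nonneg)
  ultimately have "{v \<in> zonotope X. ?f v = 0} face_of zonotope X"
    by (rule face_of_linear_level_set[OF convex_zonotope])
  then show ?thesis
    by (simp only: eq)
qed

lemma zonotope_subset: "A \<subseteq> X \<Longrightarrow> zonotope A \<subseteq> zonotope X"
  using zonotope_face_of face_of_imp_subset by blast

text \<open>Moving from \<open>q\<close> through \<open>p\<close> slightly beyond \<open>p\<close> stays in \<open>Z(A)\<close>, because the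
  coordinates of \<open>p\<close> on \<open>A\<close> are strictly between 0 and 1.\<close>

lemma zonotope_extend_segment:
  assumes AX: "A \<subseteq> X"
    and p_in: "\<And>y. y \<in> A \<Longrightarrow> 0 < coord p y \<and> coord p y < 1"
    and p_out: "\<And>y. y \<notin> A \<Longrightarrow> coord p y = 0"
    and q: "q \<in> zonotope A" "q \<noteq> p"
  obtains r where "r \<in> zonotope A" "p \<in> open_segment q r"
proof -
  have "finite A"
    using AX finite_basis finite_subset by blast
  have "0 < min (coord p y) (1 - coord p y)" if "y \<in> A" for y
    using p_in[OF that] by simp
  then obtain d where "0 < d" and d_le: "\<And>y. y \<in> A \<Longrightarrow> d \<le> min (coord p y) (1 - coord p y)"
    using finite_pos_lower_bound[OF \<open>finite A\<close>, of "\<lambda>y. min (coord p y) (1 - coord p y)"] by blast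
  define r where "r = p + d *\<^sub>R (p - q)"
  have coord_r: "coord r y = coord p y + d * (coord p y - coord q y)" for y
    by (simp add: r_def)
  have q_coords: "(y \<in> A \<longrightarrow> 0 \<le> coord q y \<and> coord q y \<le> 1) \<and> (y \<notin> A \<longrightarrow> coord q y = 0)" for y
    using q(1) by (simp add: zonotope_eq_coords[OF AX])
  have "0 \<le> coord r y \<and> coord r y \<le> 1" if "y \<in> A" for y
  proof -
    have "0 \<le> d * coord q y" "d * coord q y \<le> d" "0 \<le> d * coord p y" "d * coord p y \<le> d"
      using q_coords[of y] p_in[OF that] \<open>0 < d\<close> that by (simp_all add: mult_left_le)
    moreover have "d \<le> coord p y" "d \<le> 1 - coord p y"
      using d_le[OF that] by simp_all
    ultimately show ?thesis
      unfolding coord_r right_diff_distrib distrib_left by linarith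
  qed
  then have "r \<in> zonotope A"
    using q_coords p_out by (simp add: zonotope_eq_coords[OF AX] coord_r)
  have "q \<noteq> r"
  proof
    assume "q = r"
    then have "(1 + d) * (coord q y - coord p y) = 0" for y
      using coord_r[of y] by (simp add: algebra_simps)
    then have "q = p"
      using \<open>0 < d\<close> by (intro coord_eqI) simp
    then show False
      using q(2) by simp
  qed
  define u where "u = 1 / (1 + d)"
  have "u + u * d = 1"
    using \<open>0 < d\<close> by (simp add: u_def field_simps)
  moreover have "(1 - u) * a + u * (b + d * (b - a)) = a + (u + u * d) * (b - a)" for a b :: real
    by (simp add: algebra_simps)
  ultimately have "p = (1 - u) *\<^sub>R q + u *\<^sub>R r"
    by (intro coord_eqI) (simp add: coord_r)
  moreover have "0 < u" "u < 1"
    using \<open>0 < d\<close> by (simp_all add: u_def)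
  ultimately show thesis
    using that \<open>r \<in> zonotope A\<close> \<open>q \<noteq> r\<close> by (auto simp: in_segment)
qed

text \<open>A coordinate 0 on \<open>A\<close> would put \<open>p\<close> into the smaller face \<open>Z(A - {y})\<close>; a
  coordinate 1 would put it into the face where that coordinate is 1, which misses \<open>0\<close>.\<close>

lemma coords_if_internal_to_zonotope:
  assumes AX: "A \<subseteq> X" and "internal_to X p (zonotope A)"
  shows "(\<forall>y\<in>A. 0 < coord p y \<and> coord p y < 1) \<and> (\<forall>y. y \<notin> A \<longrightarrow> coord p y = 0)"
proof -
  have pA: "p \<in> zonotope A"
    and least: "\<And>G. G face_of zonotope X \<Longrightarrow> p \<in> G \<Longrightarrow> zonotope A \<subseteq> G"
    using assms(2) by (auto simp: internal_to_def)
  have "coord p y \<noteq> 0" if "y \<in> A" for y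
  proof
    assume "coord p y = 0"
    have AyX: "A - {y} \<subseteq> X"
      using AX by blast
    have "p \<in> zonotope (A - {y})"
      using pA \<open>coord p y = 0\<close> by (auto simp: zonotope_eq_coords[OF AX] zonotope_eq_coords[OF AyX])
    then have "zonotope A \<subseteq> zonotope (A - {y})"
      using least zonotope_face_of[OF AyX] by blast
    moreover have "y \<in> zonotope A" "y \<notin> zonotope (A - {y})"
      using that AX
      by (auto simp: zonotope_eq_coords[OF AX] zonotope_eq_coords[OF AyX] coord_basis_vector subsetD)
    ultimately show False
      by blast
  qed
  moreover have "coord p y \<noteq> 1" if "y \<in> A" for y
  proof
    assume "coord p y = 1"
    have "{v \<in> zonotope X. coord v y = 1} face_of zonotope X"
      by (rule face_of_linear_level_set[OF convex_zonotope linear_coord]) (simp add: mem_zonotope_iff)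
    moreover have "p \<in> zonotope X"
      using pA zonotope_subset[OF AX] by blast
    ultimately have "zonotope A \<subseteq> {v \<in> zonotope X. coord v y = 1}"
      using least \<open>coord p y = 1\<close> by blast
    moreover have "0 \<in> zonotope A"
      by (simp add: zonotope_eq_coords[OF AX])
    ultimately show False
      by auto
  qed
  ultimately show ?thesis
    using pA by (force simp: zonotope_eq_coords[OF AX] less_le)
qed

lemma internal_to_zonotope_if_coords:
  assumes AX: "A \<subseteq> X"
    and p_in: "\<forall>y\<in>A. 0 < coord p y \<and> coord p y < 1" and p_out: "\<forall>y. y \<notin> A \<longrightarrow> coord p y = 0"
  shows "internal_to X p (zonotope A)"
proof -
  have pA: "p \<in> zonotope A"
    using p_in p_out by (auto simp: zonotope_eq_coords[OF AX] less_imp_le)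
  have "zonotope A \<subseteq> G" if G: "G face_of zonotope X" "p \<in> G" for G
  proof
    fix q assume q: "q \<in> zonotope A"
    show "q \<in> G"
    proof (cases "q = p")
      case False
      then obtain r where "r \<in> zonotope A" "p \<in> open_segment q r"
        using zonotope_extend_segment[OF AX _ _ q] p_in p_out by blast
      then show ?thesis
        using face_ofD[OF G(1)] G(2) q zonotope_subset[OF AX] by blast
    qed (use G in simp)
  qed
  then show ?thesis
    using pA zonotope_face_of[OF AX] by (auto simp: internal_to_def)
qed

lemma internal_to_zonotope_iff:
  assumes "A \<subseteq> X"
  shows "internal_to X p (zonotope A) \<longleftrightarrow>
    (\<forall>y\<in>A. 0 < coord p y \<and> coord p y < 1) \<and> (\<forall>y. y \<notin> A \<longrightarrow> coord p y = 0)"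
  using coords_if_internal_to_zonotope[OF assms, of p] internal_to_zonotope_if_coords[OF assms, of p]
  by blast

lemma hcount_eq_card_support:
  assumes AX: "A \<subseteq> X"
  shows "hcount L X A = card {p \<in> half_open_box_points L X. {y. coord p y \<noteq> 0} = A}"
proof -
  have "p \<in> zonotope X \<and> internal_to X p (zonotope A) \<longleftrightarrow>
      (\<forall>y. 0 \<le> coord p y \<and> coord p y < 1) \<and> {y. coord p y \<noteq> 0} = A" for p
  proof
    assume "p \<in> zonotope X \<and> internal_to X p (zonotope A)"
    then show "(\<forall>y. 0 \<le> coord p y \<and> coord p y < 1) \<and> {y. coord p y \<noteq> 0} = A"
      by (auto simp: internal_to_zonotope_iff[OF AX] mem_zonotope_iff less_le)
  next
    assume "(\<forall>y. 0 \<le> coord p y \<and> coord p y < 1) \<and> {y. coord p y \<noteq> 0} = A"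
    then show "p \<in> zonotope X \<and> internal_to X p (zonotope A)"
      by (auto simp: internal_to_zonotope_iff[OF AX] mem_zonotope_iff less_le)
  qed
  then show ?thesis
    unfolding hcount_def half_open_box_points_def by (intro arg_cong[where f = card]) auto
qed

lemma half_open_box_points_eqI:
  assumes "A \<subseteq> X" "p \<in> half_open_box_points L X" "q \<in> half_open_box_points L X"
    and "p - q \<in> zspan A"
  shows "p = q"
proof (rule coord_eqI)
  fix y
  have "coord p y - coord q y \<in> \<int>"
    using representation_zspan_Ints[OF independent assms(1,4)] by simp
  then obtain k where k: "coord p y - coord q y = of_int k"
    by (auto elim: Ints_cases)
  moreover have "0 \<le> coord p y" "coord p y < 1" "0 \<le> coord q y" "coord q y < 1"
    using assms(2,3) by (simp_all add: half_open_box_points_def)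
  ultimately have "\<bar>real_of_int k\<bar> < 1"
    by linarith
  then have "k = 0"
    by linarith
  with k show "coord p y = coord q y"
    by simp
qed

end

section \<open>Lattice points of the half-open parallelepiped\<close>

locale lattice_basis = coordinate_basis +
  fixes B :: "'a set"
  assumes independent_B: "independent B" and spanning_B: "span B = UNIV"
    and basis_in_lattice: "X \<subseteq> zspan B"
begin

lemma finite_half_open_box_points: "finite (half_open_box_points (zspan B) X)"
proof -
  have "half_open_box_points (zspan B) X \<subseteq> zspan B \<inter> zonotope X"
    using less_imp_le by (fastforce simp: half_open_box_points_def mem_zonotope_iff)
  then show ?thesis
    using finite_zspan_Int_bounded[OF independent_B spanning_B bounded_zonotope] finite_subset by blast
qed

lemma exists_half_open_box_representative:
  assumes "A \<subseteq> X" "v \<in> zspan B" "v \<in> span A"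
  obtains p where "p \<in> half_open_box_points (zspan B) X" "{y. coord p y \<noteq> 0} \<subseteq> A"
    and "v - p \<in> zspan A"
proof -
  define w where "w = (\<Sum>a\<in>A. of_int \<lfloor>coord v a\<rfloor> *\<^sub>R a)"
  have "w \<in> zspan A"
    unfolding w_def zspan_def by (intro CollectI exI[of _ "\<lambda>a. \<lfloor>coord v a\<rfloor>"]) simp
  then have "v - w \<in> zspan B"
    using zspan_subset_zspan assms basis_in_lattice zspan_diff by blast
  have coord_w: "coord w y = (if y \<in> A then of_int \<lfloor>coord v y\<rfloor> else 0)" for y
    by (simp add: w_def coord_lincomb[OF assms(1)])
  have "coord v y = 0" if "y \<notin> A" for y
    using assms that span_eq_coords by blast
  then have "0 \<le> coord (v - w) y \<and> coord (v - w) y < 1" "y \<notin> A \<Longrightarrow> coord (v - w) y = 0" for y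
    by (simp_all add: coord_w) linarith
  then have "v - w \<in> half_open_box_points (zspan B) X" "{y. coord (v - w) y \<noteq> 0} \<subseteq> A"
    using \<open>v - w \<in> zspan B\<close> by (auto simp: half_open_box_points_def)
  moreover have "v - (v - w) \<in> zspan A"
    using \<open>w \<in> zspan A\<close> by simp
  ultimately show thesis
    using that by blast
qed

lemma mult_eq_card_half_open_box:
  assumes "A \<subseteq> X"
  shows "mult (zspan B) A = card {p \<in> half_open_box_points (zspan B) X. {y. coord p y \<noteq> 0} \<subseteq> A}"
    (is "_ = card ?P")
proof -
  let ?coset = "\<lambda>v. (+) v ` zspan A"
  have "?P \<subseteq> zspan B \<inter> span A"
    using span_eq_coords[OF assms] by (auto simp: half_open_box_points_def)
  moreover have "?coset v \<in> ?coset ` ?P" if v: "v \<in> zspan B" "v \<in> span A" for v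
  proof -
    obtain p where "p \<in> ?P" "v - p \<in> zspan A"
      using exists_half_open_box_representative[OF assms v] by blast
    then show ?thesis
      by (auto simp: zspan_translate_eq_iff)
  qed
  ultimately have "?coset ` (zspan B \<inter> span A) = ?coset ` ?P"
    by blast
  moreover have "inj_on ?coset ?P"
    using half_open_box_points_eqI[OF assms] by (intro inj_onI) (auto simp: zspan_translate_eq_iff)
  ultimately show ?thesis
    unfolding mult_def by (simp add: card_image)
qed

lemma mult_eq_sum_hcount:
  assumes "A \<subseteq> X"
  shows "mult (zspan B) A = (\<Sum>C\<in>Pow A. hcount (zspan B) X C)"
proof -
  have "finite A"
    using assms finite_basis finite_subset by blast
  then have "mult (zspan B) A
      = (\<Sum>C\<in>Pow A. card {p \<in> half_open_box_points (zspan B) X. {y. coord p y \<noteq> 0} = C})"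
    by (simp add: mult_eq_card_half_open_box[OF assms]
        card_subset_fibres_eq_sum_Pow[OF finite_half_open_box_points])
  also have "\<dots> = (\<Sum>C\<in>Pow A. hcount (zspan B) X C)"
    using assms by (intro sum.cong refl) (auto simp: hcount_eq_card_support)
  finally show ?thesis .
qed

end

theorem lemma4p4:
  fixes L :: "(real^'n) set" and X :: "(real^'n) set" and x :: real
  assumes "full_lattice L"
    and "X \<subseteq> L" and "independent X" and "span X = UNIV"
  shows "arith_tutte L X x 1 =
    (\<Sum>k = 0..CARD('n). real (\<Sum>A\<in>{A. A \<subseteq> X \<and> card A = CARD('n) - k}. hcount L X A) * x ^ k)"
proof -
  obtain B where B: "independent B" "span B = UNIV" "L = zspan B"
    using assms(1) unfolding full_lattice_def by blast
  interpret lattice_basis X B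
    using assms B by unfold_locales auto
  have dim_X: "dim X = CARD('n)"
    using assms(4) dim_span[of X] by (simp add: dim_UNIV)
  have card_X: "card X = CARD('n)"
    using dim_X dim_eq_card_independent[OF assms(3)] by simp
  have "arith_tutte L X x 1 = (\<Sum>A\<in>Pow X. (\<Sum>C\<in>Pow A. real (hcount L X C)) * (x - 1) ^ card (X - A))"
    unfolding arith_tutte_def
  proof (intro sum.cong refl)
    fix A assume "A \<in> Pow X"
    moreover have "dim A = card A"
      using \<open>A \<in> Pow X\<close> independent_mono[OF assms(3)] dim_eq_card_independent by blast
    ultimately show "real (mult L A) * (x - 1) ^ (dim X - dim A) * (1 - 1) ^ (card A - dim A)
        = (\<Sum>C\<in>Pow A. real (hcount L X C)) * (x - 1) ^ card (X - A)"
      using dim_X card_X B(3) finite_basis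
      by (simp add: mult_eq_sum_hcount card_Diff_subset finite_subset)
  qed
  also have "\<dots> = (\<Sum>C\<in>Pow X. real (hcount L X C) * x ^ card (X - C))"
    by (rule sum_Pow_cumulative_power[OF finite_basis])
  also have "\<dots> = (\<Sum>k = 0..CARD('n). real (\<Sum>A | A \<subseteq> X \<and> card A = CARD('n) - k. hcount L X A) * x ^ k)"
    using sum_Pow_group_by_card[OF finite_basis card_X] by simp
  finally show ?thesis .
qed

end
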